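(* Let $\delta>0$ be an ordinal and $\mathcal I_{\omega^\delta}=\{I\subset\omega^\delta:\omega^\delta\not\hookrightarrow I\}$. Then $\mathcal I_{\omega^\delta}$ is an ideal of $P(\omega^\delta)$ and (a) $\mathbb P(\omega^\delta)=\langle \mathcal I_{\omega^\delta}^+,\subset\rangle$, $\mathrm{sm}(\mathbb P(\omega^\delta))=\langle\mathcal I_{\omega^\delta}^+,\subset_{\mathcal I_{\omega^\delta}}\rangle$ and $\mathrm{sq}(\mathbb P(\omega^\delta))=(P(\omega^\delta)/\mathcal I_{\omega^\delta})^+$; (b) if $\delta\ge\omega$, then $|\mathrm{sq}(\mathbb P(\omega^\delta))|\le 2^{|\delta|}$.
   Context: $\mathbb P(X)$ is the set of subsets of the ordinal $X$ order-isomorphic to $X$, ordered by inclusion. $L\hookrightarrow A$ means $L$ order-embeds into $A$. For an ideal $\mathcal I$ on a set $X$, $\mathcal I^+=P(X)\setminus\mathcal I$, and $A\subset_{\mathcal I}B$ iff $A\setminus B\in\mathcal I$; $(P(X)/\mathcal I)^+$ is the set of nonzero elements of the quotient Boolean algebra. $\mathrm{sm}$ and $\mathrm{sq}$ denote separative modification and separative quotient of a preorder ($p\le^*q$ iff every $r\le p$ has some $s\le r$ with $s\le q$; $\mathrm{sq}$ is the antisymmetric quotient of $\le^*$). *)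

theory Defs
  imports Main
begin

text \<open>Ordinals are represented by well-order relations (as in HOL's BNF cardinal library).
The ordinal power omega^delta is represented by the standard construction: finitely supported
functions from the field of delta to the naturals, compared at the largest point
(w.r.t. delta) where they differ.\<close>

definition omega_exp_carrier :: "'b rel \<Rightarrow> ('b \<Rightarrow> nat) set" where
  "omega_exp_carrier d = {f. finite {x. f x \<noteq> 0} \<and> (\<forall>x. x \<notin> Field d \<longrightarrow> f x = 0)}"

definition omega_exp :: "'b rel \<Rightarrow> ('b \<Rightarrow> nat) rel" where
  "omega_exp d = {(f, g). f \<in> omega_exp_carrier d \<and> g \<in> omega_exp_carrier d \<and>
      (f = g \<or> (\<exists>x \<in> Field d. f x < g x \<and>
                 (\<forall>y \<in> Field d. (x, y) \<in> d \<and> y \<noteq> x \<longrightarrow> f y = g y)))}"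

definition oemb :: "'a rel \<Rightarrow> 'a set \<Rightarrow> bool" where
  "oemb r A = (\<exists>f. f ` Field r \<subseteq> A \<and>
     (\<forall>x \<in> Field r. \<forall>y \<in> Field r. (x, y) \<in> r \<and> x \<noteq> y \<longrightarrow> (f x, f y) \<in> r \<and> f x \<noteq> f y))"

definition PP :: "'a rel \<Rightarrow> 'a set set" where
  "PP r = {A. A \<subseteq> Field r \<and> (\<exists>f. bij_betw f (Field r) A \<and>
     (\<forall>x \<in> Field r. \<forall>y \<in> Field r. (x, y) \<in> r \<longleftrightarrow> (f x, f y) \<in> r))}"

definition emb_ideal :: "'a rel \<Rightarrow> 'a set set" where
  "emb_ideal r = {I. I \<subseteq> Field r \<and> \<not> oemb r I}"

definition is_ideal :: "'a set \<Rightarrow> 'a set set \<Rightarrow> bool" where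
  "is_ideal X I = (I \<subseteq> Pow X \<and> {} \<in> I \<and> X \<notin> I \<and>
     (\<forall>A \<in> I. \<forall>B. B \<subseteq> A \<longrightarrow> B \<in> I) \<and> (\<forall>A \<in> I. \<forall>B \<in> I. A \<union> B \<in> I))"

definition sep_le :: "'p set \<Rightarrow> ('p \<Rightarrow> 'p \<Rightarrow> bool) \<Rightarrow> 'p \<Rightarrow> 'p \<Rightarrow> bool" where
  "sep_le P le p q = (\<forall>r \<in> P. le r p \<longrightarrow> (\<exists>s \<in> P. le s r \<and> le s q))"

definition sq_equiv :: "'p set \<Rightarrow> ('p \<Rightarrow> 'p \<Rightarrow> bool) \<Rightarrow> 'p rel" where
  "sq_equiv P le = {(p, q). p \<in> P \<and> q \<in> P \<and> sep_le P le p q \<and> sep_le P le q p}"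

definition sq_carrier :: "'p set \<Rightarrow> ('p \<Rightarrow> 'p \<Rightarrow> bool) \<Rightarrow> 'p set set" where
  "sq_carrier P le = P // sq_equiv P le"

definition sq_le :: "'p set \<Rightarrow> ('p \<Rightarrow> 'p \<Rightarrow> bool) \<Rightarrow> 'p set \<Rightarrow> 'p set \<Rightarrow> bool" where
  "sq_le P le C D = (\<exists>p \<in> C. \<exists>q \<in> D. sep_le P le p q)"

definition bq_rel :: "'a set \<Rightarrow> 'a set set \<Rightarrow> 'a set rel" where
  "bq_rel X I = {(A, B). A \<subseteq> X \<and> B \<subseteq> X \<and> (A - B) \<union> (B - A) \<in> I}"

definition bq_nonzero :: "'a set \<Rightarrow> 'a set set \<Rightarrow> 'a set set set" where
  "bq_nonzero X I = (Pow X // bq_rel X I) - {bq_rel X I `` {{}}}"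

definition bq_le :: "'a set set \<Rightarrow> 'a set set \<Rightarrow> 'a set set \<Rightarrow> bool" where
  "bq_le I C D = (\<exists>A \<in> C. \<exists>B \<in> D. A - B \<in> I)"

definition order_iso :: "'x set \<Rightarrow> ('x \<Rightarrow> 'x \<Rightarrow> bool) \<Rightarrow> 'y set \<Rightarrow> ('y \<Rightarrow> 'y \<Rightarrow> bool) \<Rightarrow> ('x \<Rightarrow> 'y) \<Rightarrow> bool" where
  "order_iso A leA B leB f = (bij_betw f A B \<and> (\<forall>x \<in> A. \<forall>y \<in> A. leA x y \<longleftrightarrow> leB (f x) (f y)))"

end

theory Submission
  imports
    Defs
    "HOL-Library.Multiset"
    "HOL-Algebra.Free_Abelian_Groups" (* brings in HOL-Cardinals, e.g. card_of_Fpow_infinite *)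
begin

hide_const (open) monoid.mult

text \<open>
  Realise \<open>\<omega>\<^sup>\<delta>\<close> as the finitely supported functions \<open>\<delta> \<rightarrow> \<nat>\<close>, compared at the largest
  point of difference; this is the multiset order on \<open>\<delta>\<close>, hence a well-order. Since a strictly
  increasing self-map of a well-order is inflationary, a subset \<open>A\<close> of a well-order \<open>W\<close> either
  contains a copy of \<open>W\<close>, and is then order-isomorphic to \<open>W\<close>, or embeds into a proper initial
  segment of \<open>W\<close>. For \<open>W = \<omega>\<^sup>\<delta>\<close> the sets of the second kind are closed under unions:
  if \<open>A\<close> and \<open>B\<close> embed below \<open>a\<close> and \<open>b\<close>, the pointwise (natural) sum of monotone extensions
  of the two embeddings embeds \<open>A \<union> B\<close> below \<open>a \<oplus> b + 1\<close>. The rest of (a) holds for any ideal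
  \<open>I\<close>: the separative quotient of \<open>(I\<^sup>+, \<subseteq>)\<close> is \<open>(P(X)/I)\<^sup>+\<close>. For (b), \<open>\<omega>\<^sup>\<delta>\<close> has at most
  \<open>|\<delta>|\<close> elements when \<open>\<delta>\<close> is infinite.
\<close>

section \<open>Embeddings of a well-order into its subsets\<close>

definition strict_mono_rel :: "'a rel \<Rightarrow> 'a set \<Rightarrow> ('a \<Rightarrow> 'a) \<Rightarrow> bool" where
  "strict_mono_rel r A f \<longleftrightarrow> (\<forall>x\<in>A. \<forall>y\<in>A. (x, y) \<in> r - Id \<longrightarrow> (f x, f y) \<in> r - Id)"

definition embeds_below :: "'a rel \<Rightarrow> 'a set \<Rightarrow> bool" where
  "embeds_below r A \<longleftrightarrow> (\<exists>c \<in> Field r. \<exists>s. s ` A \<subseteq> underS r c \<and> strict_mono_rel r A s)"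

lemma oemb_iff_strict_mono_rel:
  "oemb r A \<longleftrightarrow> (\<exists>f. f ` Field r \<subseteq> A \<and> strict_mono_rel r (Field r) f)"
  by (simp add: oemb_def strict_mono_rel_def)

lemma strict_mono_rel_comp:
  assumes "strict_mono_rel r B g" "strict_mono_rel r A f" "f ` A \<subseteq> B"
  shows "strict_mono_rel r A (g \<circ> f)"
  using assms unfolding strict_mono_rel_def by (simp add: image_subset_iff)

lemma embed_strict_mono_rel:
  assumes "Well_order s" "embed s t f" "Restr r (Field s) \<subseteq> s" "t \<subseteq> r"
  shows "strict_mono_rel r (Field s) f"
  unfolding strict_mono_rel_def
proof (intro ballI impI)
  fix x y assume xy: "x \<in> Field s" "y \<in> Field s" "(x, y) \<in> r - Id"
  then have "(f x, f y) \<in> t"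
    using assms(3) embed_compat[OF assms(2)] unfolding compat_def by blast
  moreover have "f x \<noteq> f y"
    using embed_inj_on[OF assms(1,2)] xy unfolding inj_on_def by blast
  ultimately show "(f x, f y) \<in> r - Id" using assms(4) by blast
qed

context wo_rel
begin

lemma rel_le_less_trans: "(a, b) \<in> r \<Longrightarrow> (b, c) \<in> r - Id \<Longrightarrow> (a, c) \<in> r - Id"
  using transD[OF TRANS] antisymD[OF ANTISYM] by blast

lemma rel_less_le_trans: "(a, b) \<in> r - Id \<Longrightarrow> (b, c) \<in> r \<Longrightarrow> (a, c) \<in> r - Id"
  using transD[OF TRANS] antisymD[OF ANTISYM] by blast

lemma strict_mono_rel_inflationary:
  assumes "f ` Field r \<subseteq> Field r" "strict_mono_rel r (Field r) f"
  shows "x \<in> Field r \<Longrightarrow> (x, f x) \<in> r"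
proof (induction x rule: well_order_induct)
  case (1 x)
  show ?case
  proof (rule ccontr)
    assume "(x, f x) \<notin> r"
    moreover have fx: "f x \<in> Field r" using 1 assms(1) by blast
    ultimately have "(f x, x) \<in> r - Id" using 1 TOTALS REFL by (auto simp: refl_on_def)
    then have "(f (f x), f x) \<in> r - Id" using assms(2) 1 fx unfolding strict_mono_rel_def by blast
    moreover have "(f x, f (f x)) \<in> r" using 1 fx \<open>(f x, x) \<in> r - Id\<close> by blast
    ultimately show False using ANTISYM by (auto simp: antisym_def)
  qed
qed

lemma Field_Restr: "A \<subseteq> Field r \<Longrightarrow> Field (Restr r A) = A"
  by (simp add: REFL Refl_Field_Restr2)

lemma embed_Restr_or_embeds_below:
  assumes "A \<subseteq> Field r"
  shows "(\<exists>f. embed r (Restr r A) f) \<or> embeds_below r A"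
proof -
  have wR: "Well_order (Restr r A)" using Well_order_Restr[OF WELL] .
  have FR: "Field (Restr r A) = A" using Field_Restr[OF assms] .
  consider "(Restr r A, r) \<in> ordLess" | "(r, Restr r A) \<in> ordLeq"
    using ordLess_or_ordLeq[OF wR WELL] by blast
  then show ?thesis
  proof cases
    case 1
    then obtain f where "embedS (Restr r A) r f" unfolding ordLess_def by blast
    then have e: "embed (Restr r A) r f" and nb: "\<not> bij_betw f A (Field r)"
      unfolding embedS_def using FR by auto
    have "f ` A \<noteq> Field r" using embed_inj_on[OF wR e] nb FR unfolding bij_betw_def by simp
    moreover have "ofilter (f ` A)" using embed_Field_ofilter[OF wR WELL e] FR by simp
    ultimately obtain c where "c \<in> Field r" "f ` A = underS c"
      using ofilter_underS_Field by blast
    moreover have "strict_mono_rel r A f"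
      using embed_strict_mono_rel[OF wR e] FR by simp
    ultimately show ?thesis unfolding embeds_below_def by auto
  next
    case 2
    then show ?thesis unfolding ordLeq_def by blast
  qed
qed

lemma embeds_below_imp_not_oemb:
  assumes "embeds_below r A"
  shows "\<not> oemb r A"
proof
  assume "oemb r A"
  then obtain g where g: "g ` Field r \<subseteq> A" "strict_mono_rel r (Field r) g"
    unfolding oemb_iff_strict_mono_rel by blast
  obtain c s where c: "c \<in> Field r" "s ` A \<subseteq> underS c" "strict_mono_rel r A s"
    using assms unfolding embeds_below_def by blast
  have sg: "(s \<circ> g) ` Field r \<subseteq> underS c" using g(1) c(2) by auto
  then have "(s \<circ> g) ` Field r \<subseteq> Field r" using Order_Relation.underS_Field[of r c] by (rule order_trans)
  then have "(c, (s \<circ> g) c) \<in> r"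
    using strict_mono_rel_inflationary strict_mono_rel_comp[OF c(3) g(2,1)] c(1) by blast
  moreover have "s (g c) \<in> underS c" using sg c(1) by auto
  ultimately show False using ANTISYM by (auto simp: antisym_def underS_def)
qed

lemma embed_Restr_strict_mono:
  assumes "A \<subseteq> Field r" "embed r (Restr r A) f"
  shows "f ` Field r \<subseteq> A" and "strict_mono_rel r (Field r) f"
proof -
  show "f ` Field r \<subseteq> A" using embed_Field[OF assms(2)] Field_Restr[OF assms(1)] by simp
  show "strict_mono_rel r (Field r) f" using embed_strict_mono_rel[OF WELL assms(2)] by blast
qed

lemma oemb_iff_not_embeds_below:
  assumes "A \<subseteq> Field r"
  shows "oemb r A \<longleftrightarrow> \<not> embeds_below r A"
  using embed_Restr_or_embeds_below[OF assms] embed_Restr_strict_mono[OF assms]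
    embeds_below_imp_not_oemb oemb_iff_strict_mono_rel by metis

lemma oemb_imp_embed_Restr:
  assumes "A \<subseteq> Field r" "oemb r A"
  obtains f where "embed r (Restr r A) f"
  using embed_Restr_or_embeds_below[OF assms(1)] embeds_below_imp_not_oemb assms(2) by blast

lemma PP_iff_oemb: "A \<in> PP r \<longleftrightarrow> A \<subseteq> Field r \<and> oemb r A"
proof
  assume "A \<in> PP r"
  then obtain f where A: "A \<subseteq> Field r" and f: "bij_betw f (Field r) A"
    "\<forall>x\<in>Field r. \<forall>y\<in>Field r. (x, y) \<in> r \<longleftrightarrow> (f x, f y) \<in> r"
    unfolding PP_def by blast
  then have "strict_mono_rel r (Field r) f"
    unfolding strict_mono_rel_def bij_betw_def inj_on_def by blast
  with A f(1) show "A \<subseteq> Field r \<and> oemb r A"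
    unfolding oemb_iff_strict_mono_rel bij_betw_def by blast
next
  assume A: "A \<subseteq> Field r \<and> oemb r A"
  then obtain f where e: "embed r (Restr r A) f" using oemb_imp_embed_Restr by blast
  note f = embed_Restr_strict_mono[OF conjunct1[OF A] e]
  \<comment> \<open>\<open>f\<close> is onto \<open>A\<close>: its image is an initial segment of \<open>A\<close> and \<open>z \<le> f z\<close>\<close>
  have "A \<subseteq> f ` Field r"
  proof
    fix z assume z: "z \<in> A"
    have "Order_Relation.ofilter (Restr r A) (f ` Field r)"
      using embed_Field_ofilter[OF WELL Well_order_Restr[OF WELL] e] by (simp add: wo_rel_def)
    moreover have "(z, f z) \<in> r"
      using strict_mono_rel_inflationary[OF _ f(2)] f(1) A z by blast
    then have "(z, f z) \<in> Restr r A" using f(1) A z by blast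
    moreover have "f z \<in> f ` Field r" using z A by blast
    ultimately show "z \<in> f ` Field r"
      unfolding Order_Relation.ofilter_def under_def by blast
  qed
  then have "bij_betw f (Field r) A"
    using f(1) embed_inj_on[OF WELL e] by (simp add: bij_betw_def subset_antisym)
  moreover have "(x, y) \<in> r \<longleftrightarrow> (f x, f y) \<in> r" if xy: "x \<in> Field r" "y \<in> Field r" for x y
  proof
    show "(x, y) \<in> r \<Longrightarrow> (f x, f y) \<in> r"
      using embed_compat[OF e] unfolding compat_def by blast
    show "(f x, f y) \<in> r \<Longrightarrow> (x, y) \<in> r"
    proof (rule ccontr)
      assume "(f x, f y) \<in> r" "(x, y) \<notin> r"
      then have "(y, x) \<in> r - Id" using xy TOTALS REFL by (auto simp: refl_on_def)
      then have "(f y, f x) \<in> r - Id" using f(2) xy unfolding strict_mono_rel_def by blast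
      with \<open>(f x, f y) \<in> r\<close> show False using ANTISYM by (auto simp: antisym_def)
    qed
  qed
  ultimately show "A \<in> PP r" using A unfolding PP_def by auto
qed

lemma embeds_below_majorant:
  assumes "c \<in> Field r" "s ` A \<subseteq> underS c" "strict_mono_rel r A s"
  obtains F where "\<And>x. (F x, c) \<in> r" "\<And>x y. (x, y) \<in> r \<Longrightarrow> (F x, F y) \<in> r"
    "\<And>x y. x \<in> A \<Longrightarrow> (x, y) \<in> r - Id \<Longrightarrow> (F x, F y) \<in> r - Id"
proof -
  define U where "U x = {z \<in> Field r. \<forall>y \<in> A. (y, x) \<in> r - Id \<longrightarrow> (s y, z) \<in> r - Id}" for x
  define F where "F x = minim (U x)" for x
  have UF: "U x \<subseteq> Field r" for x by (auto simp: U_def)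
  have cU: "c \<in> U x" for x using assms(1,2) by (auto simp: U_def underS_def)
  have FU: "F x \<in> U x" for x unfolding F_def using minim_in[OF UF] cU by blast
  have F_least: "z \<in> U x \<Longrightarrow> (F x, z) \<in> r" for x z unfolding F_def using minim_least[OF UF] .
  show thesis
  proof
    show "(F x, c) \<in> r" for x using F_least cU .
    show "(F x, F y) \<in> r" if "(x, y) \<in> r" for x y
    proof -
      have "U y \<subseteq> U x"
        using that rel_less_le_trans unfolding U_def by blast
      then show ?thesis using F_least FU by blast
    qed
    show "(F x, F y) \<in> r - Id" if "x \<in> A" "(x, y) \<in> r - Id" for x y
    proof -
      have "s x \<in> Field r" using that(1) assms(2) Order_Relation.underS_Field[of r c] by blast
      then have "s x \<in> U x" using that(1) assms(3) unfolding U_def strict_mono_rel_def by blast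
      then have "(F x, s x) \<in> r" by (rule F_least)
      moreover have "(s x, F y) \<in> r - Id" using FU[of y] that unfolding U_def by blast
      ultimately show ?thesis by (rule rel_le_less_trans)
    qed
  qed
qed

end

section \<open>The ideal of sets into which the order does not embed\<close>

lemma oemb_mono: "oemb r B \<Longrightarrow> B \<subseteq> A \<Longrightarrow> oemb r A"
  unfolding oemb_def by blast

lemma oemb_Field: "oemb r (Field r)"
  unfolding oemb_def by (auto intro: exI[of _ id])

lemma is_ideal_emb_ideal:
  assumes "Field r \<noteq> {}"
    and Un: "\<And>A B. A \<in> emb_ideal r \<Longrightarrow> B \<in> emb_ideal r \<Longrightarrow> A \<union> B \<in> emb_ideal r"
  shows "is_ideal (Field r) (emb_ideal r)"
  unfolding is_ideal_def
proof (intro conjI ballI allI impI)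
  show "{} \<in> emb_ideal r" using assms(1) unfolding emb_ideal_def oemb_def by blast
  show "B \<in> emb_ideal r" if "A \<in> emb_ideal r" "B \<subseteq> A" for A B
    using that oemb_mono unfolding emb_ideal_def by blast
  show "A \<union> B \<in> emb_ideal r" if "A \<in> emb_ideal r" "B \<in> emb_ideal r" for A B
    using Un that .
qed (auto simp: emb_ideal_def oemb_Field)

lemma (in wo_rel) emb_ideal_iff_embeds_below:
  "A \<in> emb_ideal r \<longleftrightarrow> A \<subseteq> Field r \<and> embeds_below r A"
  using oemb_iff_not_embeds_below unfolding emb_ideal_def by blast

section \<open>The ordinal power \<open>\<omega>\<^sup>\<delta>\<close>\<close>

definition lex_less :: "'b rel \<Rightarrow> ('b \<Rightarrow> nat) \<Rightarrow> ('b \<Rightarrow> nat) \<Rightarrow> bool" where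
  "lex_less d f g \<longleftrightarrow>
     (\<exists>x \<in> Field d. f x < g x \<and> (\<forall>y \<in> Field d. (x, y) \<in> d \<and> y \<noteq> x \<longrightarrow> f y = g y))"

lemma omega_exp_iff:
  "(f, g) \<in> omega_exp d \<longleftrightarrow>
     f \<in> omega_exp_carrier d \<and> g \<in> omega_exp_carrier d \<and> (f = g \<or> lex_less d f g)"
  by (simp add: omega_exp_def lex_less_def)

lemma Field_omega_exp: "Field (omega_exp d) = omega_exp_carrier d"
  by (auto simp: Field_def omega_exp_iff)

lemma zero_in_omega_exp_carrier: "(\<lambda>x. 0) \<in> omega_exp_carrier d"
  by (simp add: omega_exp_carrier_def)

lemma add_in_omega_exp_carrier:
  assumes "f \<in> omega_exp_carrier d" "g \<in> omega_exp_carrier d"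
  shows "(\<lambda>x. f x + g x) \<in> omega_exp_carrier d"
proof -
  have "finite ({x. f x \<noteq> 0} \<union> {x. g x \<noteq> 0})" using assms by (simp add: omega_exp_carrier_def)
  then have "finite {x. f x + g x \<noteq> 0}" by (rule rev_finite_subset) auto
  then show ?thesis using assms by (simp add: omega_exp_carrier_def)
qed

lemma omega_exp_carrier_support:
  "f \<in> omega_exp_carrier d \<Longrightarrow> f x \<noteq> 0 \<Longrightarrow> x \<in> Field d"
  unfolding omega_exp_carrier_def by auto

lemma count_Abs_multiset_carrier:
  "f \<in> omega_exp_carrier d \<Longrightarrow> count (Abs_multiset f) = f"
  by (simp add: omega_exp_carrier_def)

lemma Abs_multiset_add:
  assumes "f \<in> omega_exp_carrier d" "g \<in> omega_exp_carrier d"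
  shows "Abs_multiset (\<lambda>x. f x + g x) = Abs_multiset f + Abs_multiset g"
  using assms add_in_omega_exp_carrier[OF assms]
  by (simp add: multiset_eq_iff count_Abs_multiset_carrier)

context wo_rel
begin

lemma finite_has_greatest:
  "finite D \<Longrightarrow> D \<noteq> {} \<Longrightarrow> D \<subseteq> Field r \<Longrightarrow> \<exists>m \<in> D. \<forall>y \<in> D. (y, m) \<in> r"
proof (induction D rule: finite_ne_induct)
  case (singleton x)
  then show ?case using REFL by (auto simp: refl_on_def)
next
  case (insert x F)
  then obtain m where m: "m \<in> F" "\<forall>y \<in> F. (y, m) \<in> r" by auto
  have "x \<in> Field r" "m \<in> Field r" using insert m by auto
  then have "(x, max2 x m) \<in> r" "(m, max2 x m) \<in> r" "max2 x m \<in> insert x F"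
    using max2_greater max2_among[of x m] m(1) by auto
  then show ?case using m(2) transD[OF TRANS] by blast
qed

lemma lex_less_total:
  assumes "f \<in> omega_exp_carrier r" "g \<in> omega_exp_carrier r" "f \<noteq> g"
  shows "lex_less r f g \<or> lex_less r g f"
proof -
  let ?D = "{x. f x \<noteq> g x}"
  have "finite ({x. f x \<noteq> 0} \<union> {x. g x \<noteq> 0})" using assms by (simp add: omega_exp_carrier_def)
  then have "finite ?D" by (rule rev_finite_subset) auto
  moreover have "?D \<noteq> {}" using assms(3) by auto
  moreover have D: "?D \<subseteq> Field r"
    using omega_exp_carrier_support[OF assms(1)] omega_exp_carrier_support[OF assms(2)] by force
  ultimately obtain m where m: "m \<in> ?D" "\<forall>y \<in> ?D. (y, m) \<in> r"
    by (metis finite_has_greatest)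
  have "m \<in> Field r" using m(1) D by blast
  moreover have agree: "\<forall>y \<in> Field r. (m, y) \<in> r \<and> y \<noteq> m \<longrightarrow> f y = g y"
  proof (intro ballI impI)
    fix y assume y: "(m, y) \<in> r \<and> y \<noteq> m"
    show "f y = g y"
    proof (rule ccontr)
      assume "f y \<noteq> g y"
      then have "(y, m) \<in> r" using m(2) by blast
      then show False using antisymD[OF ANTISYM] y by blast
    qed
  qed
  moreover have "f m < g m \<or> g m < f m" using m(1) by auto
  ultimately show ?thesis unfolding lex_less_def by (metis (no_types, lifting))
qed

lemma lex_less_imp_mult:
  assumes "f \<in> omega_exp_carrier r" "g \<in> omega_exp_carrier r" "lex_less r f g"
  shows "(Abs_multiset f, Abs_multiset g) \<in> mult (r - Id)"
proof -
  obtain x where x: "x \<in> Field r" "f x < g x" "\<forall>z \<in> Field r. (x, z) \<in> r \<and> z \<noteq> x \<longrightarrow> f z = g z"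
    using assms(3) unfolding lex_less_def by blast
  let ?M = "Abs_multiset f" and ?N = "Abs_multiset g"
  have count: "count ?M = f" "count ?N = g" using assms(1,2) by (simp_all add: count_Abs_multiset_carrier)
  have "?M = (?M \<inter># ?N) + (?M - ?N)" "?N = (?M \<inter># ?N) + (?N - ?M)"
    by (simp_all add: multiset_eq_iff min_def)
  moreover have "x \<in># ?N - ?M" using x(2) count by (simp flip: count_greater_zero_iff)
  moreover have "(k, x) \<in> r - Id" if "k \<in># ?M - ?N" for k
  proof -
    have k: "g k < f k" using that count by (simp flip: count_greater_zero_iff)
    then have "k \<in> Field r" using omega_exp_carrier_support[OF assms(1)] by simp
    moreover have "\<not> ((x, k) \<in> r \<and> k \<noteq> x)" using x(3) k \<open>k \<in> Field r\<close> by auto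
    moreover have "k \<noteq> x" using x(2) k by auto
    ultimately show ?thesis using TOTALS x(1) by blast
  qed
  ultimately show ?thesis
    by (metis empty_iff one_step_implies_mult set_mset_empty)
qed

lemma trans_strict: "trans (r - Id)"
  by (rule trans_diff_Id[OF TRANS ANTISYM])

lemma mult_strict_asym: "(M, N) \<in> mult (r - Id) \<Longrightarrow> (N, M) \<notin> mult (r - Id)"
  using irrefl_mult[OF trans_strict] trans_mult[OF trans_strict]
  unfolding irrefl_def trans_def by blast

lemma lex_less_iff_mult:
  assumes "f \<in> omega_exp_carrier r" "g \<in> omega_exp_carrier r"
  shows "lex_less r f g \<longleftrightarrow> (Abs_multiset f, Abs_multiset g) \<in> mult (r - Id)"
proof
  assume "(Abs_multiset f, Abs_multiset g) \<in> mult (r - Id)"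
  moreover from this have "f \<noteq> g" using mult_strict_asym by blast
  ultimately show "lex_less r f g"
    using lex_less_total[OF assms] lex_less_imp_mult[OF assms(2,1)] mult_strict_asym by blast
qed (rule lex_less_imp_mult[OF assms])

lemma omega_exp_less_iff_mult:
  "(f, g) \<in> omega_exp r - Id \<longleftrightarrow> f \<in> omega_exp_carrier r \<and> g \<in> omega_exp_carrier r
     \<and> (Abs_multiset f, Abs_multiset g) \<in> mult (r - Id)"
proof -
  have "lex_less r f g \<Longrightarrow> f \<noteq> g" by (auto simp: lex_less_def)
  then show ?thesis using lex_less_iff_mult mult_strict_asym unfolding Diff_iff omega_exp_iff by auto
qed

lemma Well_order_omega_exp: "Well_order (omega_exp r)"
  unfolding well_order_on_def linear_order_on_def partial_order_on_def preorder_on_def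
proof (intro conjI)
  show "omega_exp r \<subseteq> Field (omega_exp r) \<times> Field (omega_exp r)"
    by (auto intro: FieldI1 FieldI2)
  show "refl_on (Field (omega_exp r)) (omega_exp r)"
    by (auto simp: refl_on_def Field_omega_exp omega_exp_iff intro: FieldI1 FieldI2)
  show "trans (omega_exp r)"
  proof (rule transI)
    fix f g h assume fg: "(f, g) \<in> omega_exp r" and gh: "(g, h) \<in> omega_exp r"
    show "(f, h) \<in> omega_exp r"
    proof (cases "f = g \<or> g = h")
      case True then show ?thesis using fg gh by blast
    next
      case False
      then have "(Abs_multiset f, Abs_multiset g) \<in> mult (r - Id)"
        "(Abs_multiset g, Abs_multiset h) \<in> mult (r - Id)"
        using fg gh omega_exp_less_iff_mult by auto
      then have "(Abs_multiset f, Abs_multiset h) \<in> mult (r - Id)"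
        using trans_mult[OF trans_strict] unfolding trans_def by blast
      then show ?thesis using fg gh omega_exp_less_iff_mult omega_exp_iff by blast
    qed
  qed
  show "antisym (omega_exp r)"
    using omega_exp_less_iff_mult mult_strict_asym unfolding antisym_def by blast
  show "total_on (Field (omega_exp r)) (omega_exp r)"
    using lex_less_total unfolding total_on_def Field_omega_exp omega_exp_iff by blast
  have "omega_exp r - Id \<subseteq> inv_image (mult (r - Id)) Abs_multiset"
  proof (rule subrelI)
    fix f g assume "(f, g) \<in> omega_exp r - Id"
    then show "(f, g) \<in> inv_image (mult (r - Id)) Abs_multiset"
      unfolding omega_exp_less_iff_mult by simp
  qed
  then show "wf (omega_exp r - Id)"
    by (rule wf_subset[OF wf_inv_image[OF wf_mult[OF WF]]])
qed

lemma omega_exp_add_less: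
  assumes "(f, f') \<in> omega_exp r - Id" "(g, g') \<in> omega_exp r"
  shows "(\<lambda>x. f x + g x, \<lambda>x. f' x + g' x) \<in> omega_exp r - Id"
proof -
  let ?M = Abs_multiset
  have C: "f \<in> omega_exp_carrier r" "f' \<in> omega_exp_carrier r"
    "g \<in> omega_exp_carrier r" "g' \<in> omega_exp_carrier r"
    using assms by (auto simp: omega_exp_iff)
  have irrefl: "irrefl_on A (r - Id)" for A by (simp add: irrefl_on_def)
  have "(?M f + ?M g, ?M f' + ?M g) \<in> mult (r - Id)"
    using assms(1) omega_exp_less_iff_mult mult_cancel[OF trans_strict irrefl] by simp
  moreover have "(?M f' + ?M g, ?M f' + ?M g') \<in> (mult (r - Id))\<^sup>="
  proof (cases "g = g'")
    case False
    then have "(?M g, ?M g') \<in> mult (r - Id)"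
      using assms(2) omega_exp_less_iff_mult by blast
    then show ?thesis
      using mult_cancel[OF trans_strict irrefl, of "?M g" "?M f'" "?M g'"] by (simp add: add.commute)
  qed simp
  ultimately have "(?M f + ?M g, ?M f' + ?M g') \<in> mult (r - Id)"
    using trans_mult[OF trans_strict] by (auto dest: transD)
  then show ?thesis
    unfolding omega_exp_less_iff_mult
    using C add_in_omega_exp_carrier[OF C(1,3)] add_in_omega_exp_carrier[OF C(2,4)]
    by (simp add: Abs_multiset_add)
qed

lemma omega_exp_add_mono:
  assumes "(f, f') \<in> omega_exp r" "(g, g') \<in> omega_exp r"
  shows "(\<lambda>x. f x + g x, \<lambda>x. f' x + g' x) \<in> omega_exp r"
proof (cases "f = f'")
  case True
  show ?thesis
  proof (cases "g = g'")
    case True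
    then show ?thesis
      using \<open>f = f'\<close> assms add_in_omega_exp_carrier by (simp add: omega_exp_iff)
  next
    case False
    then have "(\<lambda>x. g x + f x, \<lambda>x. g' x + f' x) \<in> omega_exp r - Id"
      using omega_exp_add_less assms by blast
    then show ?thesis by (simp add: add.commute)
  qed
next
  case False
  then show ?thesis using omega_exp_add_less assms by blast
qed

lemma omega_exp_no_greatest:
  assumes "Field r \<noteq> {}" "f \<in> omega_exp_carrier r"
  obtains g where "(f, g) \<in> omega_exp r - Id"
proof -
  obtain x where x: "x \<in> Field r" using assms(1) by blast
  have "finite (insert x {y. f y \<noteq> 0})" using assms(2) by (simp add: omega_exp_carrier_def)
  then have "finite {y. (f(x := Suc (f x))) y \<noteq> 0}" by (rule rev_finite_subset) auto
  then have "f(x := Suc (f x)) \<in> omega_exp_carrier r"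
    using assms(2) x by (auto simp: omega_exp_carrier_def)
  moreover have "lex_less r f (f(x := Suc (f x)))" unfolding lex_less_def using x by auto
  moreover have "f \<noteq> f(x := Suc (f x))" by (metis fun_upd_same n_not_Suc_n)
  ultimately have "(f, f(x := Suc (f x))) \<in> omega_exp r - Id"
    using assms(2) by (simp add: omega_exp_iff)
  then show thesis by (rule that)
qed

lemma embeds_below_Un_omega_exp:
  assumes "Field r \<noteq> {}" "embeds_below (omega_exp r) A" "embeds_below (omega_exp r) B"
  shows "embeds_below (omega_exp r) (A \<union> B)"
proof -
  interpret W: wo_rel "omega_exp r" using Well_order_omega_exp by (simp add: wo_rel_def)
  obtain a sa where a: "a \<in> Field (omega_exp r)" "sa ` A \<subseteq> W.underS a"
    "strict_mono_rel (omega_exp r) A sa"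
    using assms(2) unfolding embeds_below_def by blast
  obtain Fa where Fa: "\<And>x. (Fa x, a) \<in> omega_exp r"
    "\<And>x y. (x, y) \<in> omega_exp r \<Longrightarrow> (Fa x, Fa y) \<in> omega_exp r"
    "\<And>x y. x \<in> A \<Longrightarrow> (x, y) \<in> omega_exp r - Id \<Longrightarrow> (Fa x, Fa y) \<in> omega_exp r - Id"
    using W.embeds_below_majorant[OF a] by blast
  obtain b sb where b: "b \<in> Field (omega_exp r)" "sb ` B \<subseteq> W.underS b"
    "strict_mono_rel (omega_exp r) B sb"
    using assms(3) unfolding embeds_below_def by blast
  obtain Fb where Fb: "\<And>x. (Fb x, b) \<in> omega_exp r"
    "\<And>x y. (x, y) \<in> omega_exp r \<Longrightarrow> (Fb x, Fb y) \<in> omega_exp r"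
    "\<And>x y. x \<in> B \<Longrightarrow> (x, y) \<in> omega_exp r - Id \<Longrightarrow> (Fb x, Fb y) \<in> omega_exp r - Id"
    using W.embeds_below_majorant[OF b] by blast
  define s where "s x = (\<lambda>z. Fa x z + Fb x z)" for x
  obtain c where c: "(\<lambda>z. a z + b z, c) \<in> omega_exp r - Id"
    using omega_exp_no_greatest[OF assms(1) add_in_omega_exp_carrier] a(1) b(1)
    unfolding Field_omega_exp by blast
  have "(s x, c) \<in> omega_exp r - Id" for x
    using W.rel_le_less_trans[OF omega_exp_add_mono[OF Fa(1) Fb(1)] c] unfolding s_def .
  then have "s ` (A \<union> B) \<subseteq> W.underS c" by (auto simp: underS_def)
  moreover have "c \<in> Field (omega_exp r)" using c by (auto intro: FieldI2)
  moreover have "strict_mono_rel (omega_exp r) (A \<union> B) s"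
    unfolding strict_mono_rel_def
  proof (intro ballI impI)
    fix x y assume x: "x \<in> A \<union> B" and xy: "(x, y) \<in> omega_exp r - Id"
    show "(s x, s y) \<in> omega_exp r - Id"
    proof (cases "x \<in> A")
      case True
      then show ?thesis
        unfolding s_def using omega_exp_add_less[OF Fa(3) Fb(2)] xy by blast
    next
      case False
      then have "(\<lambda>z. Fb x z + Fa x z, \<lambda>z. Fb y z + Fa y z) \<in> omega_exp r - Id"
        using omega_exp_add_less[OF Fb(3) Fa(2)] x xy by blast
      then show ?thesis unfolding s_def by (simp add: add.commute)
    qed
  qed
  ultimately show ?thesis unfolding embeds_below_def by blast
qed

lemma is_ideal_emb_ideal_omega_exp:
  assumes "Field r \<noteq> {}"
  shows "is_ideal (Field (omega_exp r)) (emb_ideal (omega_exp r))"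
proof (rule is_ideal_emb_ideal)
  show "Field (omega_exp r) \<noteq> {}"
    using zero_in_omega_exp_carrier by (auto simp: Field_omega_exp)
  interpret W: wo_rel "omega_exp r" using Well_order_omega_exp by (simp add: wo_rel_def)
  show "A \<union> B \<in> emb_ideal (omega_exp r)"
    if "A \<in> emb_ideal (omega_exp r)" "B \<in> emb_ideal (omega_exp r)" for A B
    using that embeds_below_Un_omega_exp[OF assms] unfolding W.emb_ideal_iff_embeds_below by blast
qed

end

section \<open>Separative quotient of the positive sets of an ideal\<close>

definition positive_sets :: "'a set \<Rightarrow> 'a set set \<Rightarrow> 'a set set" where
  "positive_sets X I = {A. A \<subseteq> X \<and> A \<notin> I}"

context
  fixes X :: "'a set" and I :: "'a set set"
  assumes ideal: "is_ideal X I"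
begin

lemma empty_in_ideal: "{} \<in> I"
  using ideal unfolding is_ideal_def by blast

lemma ideal_subset: "A \<in> I \<Longrightarrow> B \<subseteq> A \<Longrightarrow> B \<in> I"
  using ideal unfolding is_ideal_def by blast

lemma ideal_Un: "A \<in> I \<Longrightarrow> B \<in> I \<Longrightarrow> A \<union> B \<in> I"
  using ideal unfolding is_ideal_def by blast

lemma ideal_Un_iff: "A \<union> B \<in> I \<longleftrightarrow> A \<in> I \<and> B \<in> I"
  using ideal_subset ideal_Un by blast

lemma bq_rel_iff: "(A, B) \<in> bq_rel X I \<longleftrightarrow> A \<subseteq> X \<and> B \<subseteq> X \<and> A - B \<in> I \<and> B - A \<in> I"
  by (simp add: bq_rel_def ideal_Un_iff)

lemma equiv_bq_rel: "equiv (Pow X) (bq_rel X I)"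
proof (rule equivI)
  show "bq_rel X I \<subseteq> Pow X \<times> Pow X" by (auto simp: bq_rel_iff)
  show "refl_on (Pow X) (bq_rel X I)"
    using ideal unfolding is_ideal_def refl_on_def by (auto simp: bq_rel_iff)
  show "sym (bq_rel X I)" by (auto simp: sym_def bq_rel_iff)
  show "trans (bq_rel X I)"
  proof (rule transI)
    fix A B C assume "(A, B) \<in> bq_rel X I" "(B, C) \<in> bq_rel X I"
    moreover have "A - C \<subseteq> (A - B) \<union> (B - C)" "C - A \<subseteq> (C - B) \<union> (B - A)" by blast+
    ultimately show "(A, C) \<in> bq_rel X I"
      using ideal_subset ideal_Un unfolding bq_rel_iff by meson
  qed
qed

lemma positive_sets_closed:
  assumes "A \<in> positive_sets X I" "(A, B) \<in> bq_rel X I"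
  shows "B \<in> positive_sets X I"
proof -
  have "A \<subseteq> B \<union> (A - B)" by blast
  then show ?thesis
    using assms ideal_subset ideal_Un unfolding positive_sets_def bq_rel_iff by blast
qed

lemma sep_le_positive_sets_iff:
  assumes "A \<in> positive_sets X I" "B \<in> positive_sets X I"
  shows "sep_le (positive_sets X I) (\<subseteq>) A B \<longleftrightarrow> A - B \<in> I"
proof
  assume sep: "sep_le (positive_sets X I) (\<subseteq>) A B"
  show "A - B \<in> I"
  proof (rule ccontr)
    assume "A - B \<notin> I"
    then have "A - B \<in> positive_sets X I" using assms(1) unfolding positive_sets_def by blast
    then obtain S where "S \<in> positive_sets X I" "S \<subseteq> A - B" "S \<subseteq> B"
      using sep unfolding sep_le_def by blast
    then have "{} \<in> positive_sets X I" by (metis Diff_disjoint disjoint_iff subset_iff subset_empty)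
    then show False using empty_in_ideal unfolding positive_sets_def by blast
  qed
next
  assume AB: "A - B \<in> I"
  show "sep_le (positive_sets X I) (\<subseteq>) A B"
    unfolding sep_le_def
  proof (intro ballI impI)
    fix R assume R: "R \<in> positive_sets X I" "R \<subseteq> A"
    have "R - B \<in> I" using ideal_subset[OF AB] R(2) by blast
    moreover have "R = (R \<inter> B) \<union> (R - B)" by blast
    ultimately have "R \<inter> B \<notin> I" using R(1) ideal_Un unfolding positive_sets_def by force
    then have "R \<inter> B \<in> positive_sets X I" using R(1) unfolding positive_sets_def by blast
    then show "\<exists>S \<in> positive_sets X I. S \<subseteq> R \<and> S \<subseteq> B" by blast
  qed
qed

lemma sq_equiv_class_positive_sets:
  assumes "A \<in> positive_sets X I"
  shows "sq_equiv (positive_sets X I) (\<subseteq>) `` {A} = bq_rel X I `` {A}"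
proof (intro equalityI subsetI)
  fix B assume "B \<in> sq_equiv (positive_sets X I) (\<subseteq>) `` {A}"
  then have B: "B \<in> positive_sets X I" and "sep_le (positive_sets X I) (\<subseteq>) A B"
    "sep_le (positive_sets X I) (\<subseteq>) B A"
    unfolding sq_equiv_def by auto
  then have "A - B \<in> I" "B - A \<in> I" using sep_le_positive_sets_iff assms by blast+
  then show "B \<in> bq_rel X I `` {A}"
    using assms B unfolding positive_sets_def by (simp add: bq_rel_iff)
next
  fix B assume "B \<in> bq_rel X I `` {A}"
  then have AB: "(A, B) \<in> bq_rel X I" by simp
  then have B: "B \<in> positive_sets X I" by (rule positive_sets_closed[OF assms])
  have "sep_le (positive_sets X I) (\<subseteq>) A B" "sep_le (positive_sets X I) (\<subseteq>) B A"
    using AB sep_le_positive_sets_iff[OF assms B] sep_le_positive_sets_iff[OF B assms]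
    unfolding bq_rel_iff by blast+
  then show "B \<in> sq_equiv (positive_sets X I) (\<subseteq>) `` {A}"
    using assms B unfolding sq_equiv_def by blast
qed

lemma sq_carrier_positive_sets: "sq_carrier (positive_sets X I) (\<subseteq>) = bq_nonzero X I"
proof -
  have "bq_rel X I `` {A} = bq_rel X I `` {{}} \<longleftrightarrow> A \<in> I" if "A \<subseteq> X" for A
    using equiv_class_eq_iff[OF equiv_bq_rel, of A "{}"] that by (simp add: bq_rel_iff empty_in_ideal)
  then show ?thesis
    unfolding sq_carrier_def bq_nonzero_def quotient_def
    using sq_equiv_class_positive_sets by (auto simp: positive_sets_def)
qed

lemma order_iso_sq_positive_sets:
  "order_iso (sq_carrier (positive_sets X I) (\<subseteq>)) (sq_le (positive_sets X I) (\<subseteq>))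
     (bq_nonzero X I) (bq_le I) id"
  unfolding order_iso_def
proof (intro conjI ballI)
  show "bij_betw id (sq_carrier (positive_sets X I) (\<subseteq>)) (bq_nonzero X I)"
    by (simp add: sq_carrier_positive_sets)
  fix C D assume "C \<in> sq_carrier (positive_sets X I) (\<subseteq>)" "D \<in> sq_carrier (positive_sets X I) (\<subseteq>)"
  then have "C \<subseteq> positive_sets X I" "D \<subseteq> positive_sets X I"
    unfolding sq_carrier_def quotient_def sq_equiv_def by auto
  then have "\<forall>A \<in> C. \<forall>B \<in> D. sep_le (positive_sets X I) (\<subseteq>) A B \<longleftrightarrow> A - B \<in> I"
    using sep_le_positive_sets_iff by blast
  then show "sq_le (positive_sets X I) (\<subseteq>) C D \<longleftrightarrow> bq_le I (id C) (id D)"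
    unfolding sq_le_def bq_le_def by auto
qed

end

section \<open>Cardinality\<close>

lemma card_of_sq_carrier: "|sq_carrier P leq| \<le>o |P|"
proof -
  have "sq_carrier P leq = (\<lambda>p. sq_equiv P leq `` {p}) ` P"
    unfolding sq_carrier_def quotient_def by blast
  then show ?thesis using card_of_image by metis
qed

lemma card_of_omega_exp_carrier:
  assumes "infinite (Field d)"
  shows "|omega_exp_carrier d| \<le>o |Field d|"
proof -
  define graph where "graph f = {(x, f x) | x. f x \<noteq> 0}" for f :: "'a \<Rightarrow> nat"
  have graph_iff: "(x, v) \<in> graph f \<longleftrightarrow> v = f x \<and> v \<noteq> 0" for f x v
    unfolding graph_def by blast
  have "inj graph"
  proof (rule injI)
    fix f g assume "graph f = graph g"
    then have "f x = g x" for x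
      using graph_iff[of x "f x" f] graph_iff[of x "f x" g] graph_iff[of x "g x" f]
        graph_iff[of x "g x" g] by metis
    then show "f = g" by blast
  qed
  moreover have "graph ` omega_exp_carrier d \<subseteq> Fpow (Field d \<times> (UNIV :: nat set))"
  proof
    fix G assume "G \<in> graph ` omega_exp_carrier d"
    then obtain f where f: "f \<in> omega_exp_carrier d" "G = graph f" by blast
    then have G: "G = (\<lambda>x. (x, f x)) ` {x. f x \<noteq> 0}" unfolding graph_def by blast
    have "finite G" unfolding G using f(1) by (simp add: omega_exp_carrier_def)
    moreover have "G \<subseteq> Field d \<times> UNIV" unfolding G using omega_exp_carrier_support[OF f(1)] by auto
    ultimately show "G \<in> Fpow (Field d \<times> UNIV)" by (simp add: Fpow_def)
  qed
  ultimately have "|omega_exp_carrier d| \<le>o |Fpow (Field d \<times> (UNIV :: nat set))|"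
    using card_of_ordLeq[of "omega_exp_carrier d"] inj_on_subset[OF \<open>inj graph\<close> subset_UNIV] by blast
  also have "|Fpow (Field d \<times> (UNIV :: nat set))| =o |Field d \<times> (UNIV :: nat set)|"
    using assms by (intro card_of_Fpow_infinite) (auto simp: finite_cartesian_product_iff)
  also have "|Field d \<times> (UNIV :: nat set)| =o |Field d|"
    using card_of_Times_infinite[OF assms UNIV_not_empty] infinite_iff_card_of_nat assms by blast
  finally show ?thesis .
qed

theorem mainTheorem4:
  fixes d :: "'b rel"
  assumes "well_order_on (Field d) d" and "Field d \<noteq> {}"
  shows "is_ideal (Field (omega_exp d)) (emb_ideal (omega_exp d))
    \<and> PP (omega_exp d) = {A. A \<subseteq> Field (omega_exp d) \<and> A \<notin> emb_ideal (omega_exp d)}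
    \<and> (\<forall>A \<in> PP (omega_exp d). \<forall>B \<in> PP (omega_exp d).
          sep_le (PP (omega_exp d)) (\<subseteq>) A B \<longleftrightarrow> A - B \<in> emb_ideal (omega_exp d))
    \<and> (\<exists>f. order_iso (sq_carrier (PP (omega_exp d)) (\<subseteq>)) (sq_le (PP (omega_exp d)) (\<subseteq>))
                      (bq_nonzero (Field (omega_exp d)) (emb_ideal (omega_exp d)))
                      (bq_le (emb_ideal (omega_exp d))) f)
    \<and> ((natLeq, d) \<in> ordLeq \<longrightarrow>
          (card_of (sq_carrier (PP (omega_exp d)) (\<subseteq>)), card_of (Pow (Field d))) \<in> ordLeq)"
proof -
  interpret wo_rel d using assms(1) by (simp add: wo_rel_def)
  let ?W = "omega_exp d"
  have ideal: "is_ideal (Field ?W) (emb_ideal ?W)"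
    using is_ideal_emb_ideal_omega_exp[OF assms(2)] .
  have PP_eq: "PP ?W = positive_sets (Field ?W) (emb_ideal ?W)"
    using wo_rel.PP_iff_oemb[of ?W] Well_order_omega_exp
    unfolding positive_sets_def emb_ideal_def wo_rel_def by auto
  have "|sq_carrier (PP ?W) (\<subseteq>)| \<le>o |Pow (Field d)|" if "natLeq \<le>o d"
  proof -
    have "infinite (Field d)"
      using card_of_mono2[OF that] card_of_ordLeq_infinite by (auto simp: Field_natLeq)
    have "PP ?W \<subseteq> Pow (Field ?W)" unfolding PP_def by blast
    then have "|sq_carrier (PP ?W) (\<subseteq>)| \<le>o |Pow (omega_exp_carrier d)|"
      using card_of_sq_carrier card_of_mono1 ordLeq_transitive by (metis Field_omega_exp)
    also have "|Pow (omega_exp_carrier d)| \<le>o |Pow (Field d)|"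
      using card_of_Pow_mono card_of_omega_exp_carrier \<open>infinite (Field d)\<close> by blast
    finally show ?thesis .
  qed
  then show ?thesis
    using ideal sep_le_positive_sets_iff[OF ideal] order_iso_sq_positive_sets[OF ideal]
    unfolding PP_eq by (auto simp: positive_sets_def)
qed

end
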